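(* (i) Let $G_1=(V_1,E_1)$ and $G_2=(V_2,E_2)$ be geometric graphs in the same finite-dimensional real vector space $X$, and suppose $V_{12}=V_1\cap V_2$ contains at least two distinct vertices. Let $E_{12}$ be the set of edges of $G_1$ both of whose endpoints lie in $V_{12}$. Let $G=(V,E)$ be a geometric graph in $X$ with $V=V_1\cup V_2$ and $E\supseteq (E_1\setminus E_{12})\cup E_2$. If $G_1$ and $G_2$ are both indecomposable, then $G$ is indecomposable. (ii) Let $G_1=(V_1,E_1)$ and $G_2=(V_2,E_2)$ be indecomposable geometric graphs in the same space $X$, and suppose $V_1\cap V_2$ contains two distinct vertices $u$ and $w$. Let $G=(V,E)$ be the geometric graph with $V=V_1\cup V_2$ and $E=(E_1\setminus\{[u,w]\})\cup E_2$. Then $G$ is indecomposable.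
   Context: A geometric graph is a graph $G=(V,E)$ whose vertex set $V$ is a subset of a finite-dimensional real vector space $X$ and whose edges are line segments $[v,w]$ joining members of $V$. A function $f\colon V\to X$ is a decomposing function for $G$ if, for every edge $[v,w]\in E$, $f(v)-f(w)$ is a scalar multiple (any real scalar, possibly zero or negative) of $v-w$. The graph $G$ is indecomposable if every decomposing function is the restriction to $V$ of a map $x\mapsto \alpha x+z$ for some scalar $\alpha$ and vector $z\in X$ (this includes constant maps); otherwise $G$ is decomposable. In (ii), nothing is assumed about whether $[u,w]$ is an edge of $G_1$ or of $G_2$. *)

theory Defs
  imports "HOL-Analysis.Analysis"
begin

text \<open>A geometric graph in a finite-dimensional real vector space 'a: vertex set V and
  edge set E, where the edge (segment) [v,w] is represented by its endpoint set {v,w}.\<close>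

definition geometric_graph :: "'a::euclidean_space set \<Rightarrow> 'a set set \<Rightarrow> bool" where
  "geometric_graph V E \<longleftrightarrow> (\<forall>e\<in>E. \<exists>v w. e = {v, w} \<and> v \<noteq> w \<and> v \<in> V \<and> w \<in> V)"

definition decomposing_function :: "'a::euclidean_space set \<Rightarrow> 'a set set \<Rightarrow> ('a \<Rightarrow> 'a) \<Rightarrow> bool" where
  "decomposing_function V E f \<longleftrightarrow>
     (\<forall>v w. {v, w} \<in> E \<longrightarrow> (\<exists>c::real. f v - f w = c *\<^sub>R (v - w)))"

definition indecomposable :: "'a::euclidean_space set \<Rightarrow> 'a set set \<Rightarrow> bool" where
  "indecomposable V E \<longleftrightarrow>
     (\<forall>f. decomposing_function V E f \<longrightarrow>
        (\<exists>(\<alpha>::real) z. \<forall>x\<in>V. f x = \<alpha> *\<^sub>R x + z))"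

end

theory Submission
  imports Defs
begin

text \<open>A decomposing function of the glued graph restricts to one of the second graph, hence is
  affine there. It is then also decomposing for the first graph: the edges of the first graph that
  were dropped have both endpoints in the second graph, where the affine map scales every
  difference by the same factor. So the map is affine on each part, and two affine maps
  \<open>x \<mapsto> \<alpha> x + z\<close> that agree at two distinct points coincide.\<close>

lemma decomposing_function_subset:
  assumes "E \<subseteq> E'" and "decomposing_function V' E' f"
  shows "decomposing_function V E f"
  using assms unfolding decomposing_function_def by blast

lemma affine_on_diff:
  fixes f :: "'a::real_vector \<Rightarrow> 'a"
  assumes "\<forall>x\<in>S. f x = \<alpha> *\<^sub>R x + z" and "v \<in> S" and "w \<in> S"
  shows "f v - f w = \<alpha> *\<^sub>R (v - w)"
  using assms by (simp add: scaleR_diff_right)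

lemma affine_maps_agreeing_at_two_points:
  fixes a b z1 z2 :: "'a::real_vector"
  assumes "\<alpha>1 *\<^sub>R a + z1 = \<alpha>2 *\<^sub>R a + z2" and "\<alpha>1 *\<^sub>R b + z1 = \<alpha>2 *\<^sub>R b + z2"
    and "a \<noteq> b"
  shows "\<alpha>1 = \<alpha>2" and "z1 = z2"
proof -
  have "(\<alpha>1 - \<alpha>2) *\<^sub>R (a - b) = (\<alpha>1 *\<^sub>R a + z1) - (\<alpha>1 *\<^sub>R b + z1) - ((\<alpha>2 *\<^sub>R a + z2) - (\<alpha>2 *\<^sub>R b + z2))"
    by (simp add: algebra_simps)
  also have "\<dots> = 0"
    using assms(1,2) by simp
  finally show "\<alpha>1 = \<alpha>2"
    using assms(3) by simp
  then show "z1 = z2"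
    using assms(1) by simp
qed

lemma indecomposable_glue:
  assumes indec1: "indecomposable V1 E1" and indec2: "indecomposable V2 E2"
    and a: "a \<in> V1 \<inter> V2" and b: "b \<in> V1 \<inter> V2" and "a \<noteq> b"
    and "E2 \<subseteq> E"
    and E1_kept: "\<And>e. e \<in> E1 \<Longrightarrow> e \<in> E \<or> e \<subseteq> V2"
  shows "indecomposable (V1 \<union> V2) E"
  unfolding indecomposable_def
proof (intro allI impI)
  fix f
  assume dec: "decomposing_function (V1 \<union> V2) E f"
  have "decomposing_function V2 E2 f"
    using decomposing_function_subset[OF \<open>E2 \<subseteq> E\<close> dec] .
  then obtain \<alpha>2 z2 where f2: "\<forall>x\<in>V2. f x = \<alpha>2 *\<^sub>R x + z2"
    using indec2 unfolding indecomposable_def by blast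
  have "decomposing_function V1 E1 f"
    unfolding decomposing_function_def
  proof (intro allI impI)
    fix v w
    assume e: "{v, w} \<in> E1"
    show "\<exists>c. f v - f w = c *\<^sub>R (v - w)"
    proof (cases "{v, w} \<in> E")
      case True
      then show ?thesis
        using dec unfolding decomposing_function_def by blast
    next
      case False
      then have "v \<in> V2" "w \<in> V2"
        using E1_kept[OF e] by auto
      then have "f v - f w = \<alpha>2 *\<^sub>R (v - w)"
        by (rule affine_on_diff[OF f2])
      then show ?thesis ..
    qed
  qed
  then obtain \<alpha>1 z1 where f1: "\<forall>x\<in>V1. f x = \<alpha>1 *\<^sub>R x + z1"
    using indec1 unfolding indecomposable_def by blast
  have "\<alpha>1 *\<^sub>R a + z1 = \<alpha>2 *\<^sub>R a + z2" "\<alpha>1 *\<^sub>R b + z1 = \<alpha>2 *\<^sub>R b + z2"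
    using f1 f2 a b by auto
  then have "\<alpha>1 = \<alpha>2" "z1 = z2"
    using \<open>a \<noteq> b\<close> by (rule affine_maps_agreeing_at_two_points)+
  then show "\<exists>\<alpha> z. \<forall>x\<in>V1 \<union> V2. f x = \<alpha> *\<^sub>R x + z"
    using f1 f2 by blast
qed

theorem theorem2:
  fixes V1 V2 :: "'a::euclidean_space set" and E1 E2 :: "'a set set"
  shows
  "(\<forall>V E. geometric_graph V1 E1 \<and> geometric_graph V2 E2 \<and>
      (\<exists>a b. a \<in> V1 \<inter> V2 \<and> b \<in> V1 \<inter> V2 \<and> a \<noteq> b) \<and>
      geometric_graph V E \<and> V = V1 \<union> V2 \<and>
      (E1 - {e\<in>E1. e \<subseteq> V1 \<inter> V2}) \<union> E2 \<subseteq> E \<and>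
      indecomposable V1 E1 \<and> indecomposable V2 E2
      \<longrightarrow> indecomposable V E)
   \<and>
   (\<forall>u w. geometric_graph V1 E1 \<and> geometric_graph V2 E2 \<and>
      indecomposable V1 E1 \<and> indecomposable V2 E2 \<and>
      u \<in> V1 \<inter> V2 \<and> w \<in> V1 \<inter> V2 \<and> u \<noteq> w
      \<longrightarrow> indecomposable (V1 \<union> V2) ((E1 - {{u, w}}) \<union> E2))"
proof (intro conjI allI impI)
  fix V E
  assume h: "geometric_graph V1 E1 \<and> geometric_graph V2 E2 \<and>
      (\<exists>a b. a \<in> V1 \<inter> V2 \<and> b \<in> V1 \<inter> V2 \<and> a \<noteq> b) \<and>
      geometric_graph V E \<and> V = V1 \<union> V2 \<and>
      (E1 - {e\<in>E1. e \<subseteq> V1 \<inter> V2}) \<union> E2 \<subseteq> E \<and>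
      indecomposable V1 E1 \<and> indecomposable V2 E2"
  then obtain a b where ab: "a \<in> V1 \<inter> V2" "b \<in> V1 \<inter> V2" "a \<noteq> b"
    by blast
  have "indecomposable (V1 \<union> V2) E"
  proof (rule indecomposable_glue[OF _ _ ab])
    fix e
    assume "e \<in> E1"
    then show "e \<in> E \<or> e \<subseteq> V2"
      using h by blast
  qed (use h in blast)+
  with h show "indecomposable V E"
    by simp
next
  fix u w
  assume "geometric_graph V1 E1 \<and> geometric_graph V2 E2 \<and>
      indecomposable V1 E1 \<and> indecomposable V2 E2 \<and>
      u \<in> V1 \<inter> V2 \<and> w \<in> V1 \<inter> V2 \<and> u \<noteq> w"
  then show "indecomposable (V1 \<union> V2) ((E1 - {{u, w}}) \<union> E2)"
    by (intro indecomposable_glue[of V1 E1 V2 E2 u w]) auto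
qed

end
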